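(* Let $P$ be a 6-stack of rank $n$ and let $Q$ be a retract of $P$ that is a 4-tower, such that $\#(P(0)\cap Q(0))=2$, where $Q(0)$ is the set of minimal elements of $Q$. Then $n\ge 3$ and the poset $P(3,n)$ has a retract that is a 4-tower.
   Context: All posets are finite. For a poset $P$ and $p\in P$, the rank $r(p)$ of $p$ is the largest $m$ such that there is a chain $p_0<\dots<p_m=p$ in $P$. $P$ is ranked of rank $r(P)$ if every maximal chain has exactly $r(P)+1$ elements. For $0\le i\le j$, $P(i,j)=\{p\in P:i\le r(p)\le j\}$, $P(i)=P(i,i)$ (induced order). A subset $Q\subseteq P$ (induced order) is a retract of $P$ if there is an order-preserving $f:P\to Q$ with $f(q)=q$ for all $q\in Q$. The 6-crown $C_6$ is the poset on $\{x_0,x_1,x_2,y_0,y_1,y_2\}$ whose only strict comparabilities are $x_0<y_0>x_1<y_1>x_2<y_2>x_0$. A 6-stack is a ranked poset $P$ of rank $n\ge1$ such that $P(i,i+1)\cong C_6$ for each $0\le i<n$. The ordinal sum of posets $P_1,\dots,P_k$ ($k\ge1$) is their disjoint union ordered by the orders of the $P_i$ together with $p<q$ whenever $p\in P_i,q\in P_j,i<j$. A 4-tower is an ordinal sum of one or more two-element antichains. *)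

theory Defs
  imports Main
begin

text \<open>A finite poset is a carrier set together with a relation le that is a
partial order on the carrier. Subposets carry the induced order, i.e. the same
relation restricted to a smaller carrier.\<close>

definition poset_on :: "'a set \<Rightarrow> ('a \<Rightarrow> 'a \<Rightarrow> bool) \<Rightarrow> bool" where
  "poset_on P le \<longleftrightarrow> finite P \<and>
     (\<forall>x\<in>P. le x x) \<and>
     (\<forall>x\<in>P. \<forall>y\<in>P. le x y \<and> le y x \<longrightarrow> x = y) \<and>
     (\<forall>x\<in>P. \<forall>y\<in>P. \<forall>z\<in>P. le x y \<and> le y z \<longrightarrow> le x z)"

definition strict :: "('a \<Rightarrow> 'a \<Rightarrow> bool) \<Rightarrow> 'a \<Rightarrow> 'a \<Rightarrow> bool" where
  "strict le x y \<longleftrightarrow> le x y \<and> x \<noteq> y"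

definition prank :: "'a set \<Rightarrow> ('a \<Rightarrow> 'a \<Rightarrow> bool) \<Rightarrow> 'a \<Rightarrow> nat" where
  "prank P le p = Max {m. \<exists>xs. length xs = Suc m \<and> set xs \<subseteq> P \<and>
       sorted_wrt (strict le) xs \<and> last xs = p}"

definition is_chain :: "'a set \<Rightarrow> ('a \<Rightarrow> 'a \<Rightarrow> bool) \<Rightarrow> 'a set \<Rightarrow> bool" where
  "is_chain P le C \<longleftrightarrow> C \<subseteq> P \<and> (\<forall>x\<in>C. \<forall>y\<in>C. le x y \<or> le y x)"

definition maximal_chain :: "'a set \<Rightarrow> ('a \<Rightarrow> 'a \<Rightarrow> bool) \<Rightarrow> 'a set \<Rightarrow> bool" where
  "maximal_chain P le C \<longleftrightarrow> is_chain P le C \<and>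
     (\<forall>D. is_chain P le D \<and> C \<subseteq> D \<longrightarrow> D = C)"

definition ranked :: "'a set \<Rightarrow> ('a \<Rightarrow> 'a \<Rightarrow> bool) \<Rightarrow> nat \<Rightarrow> bool" where
  "ranked P le r \<longleftrightarrow> (\<forall>C. maximal_chain P le C \<longrightarrow> card C = Suc r)"

definition levels :: "'a set \<Rightarrow> ('a \<Rightarrow> 'a \<Rightarrow> bool) \<Rightarrow> nat \<Rightarrow> nat \<Rightarrow> 'a set" where
  "levels P le i j = {p\<in>P. i \<le> prank P le p \<and> prank P le p \<le> j}"

definition order_iso :: "'a set \<Rightarrow> ('a \<Rightarrow> 'a \<Rightarrow> bool) \<Rightarrow> 'b set \<Rightarrow> ('b \<Rightarrow> 'b \<Rightarrow> bool) \<Rightarrow> bool" where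
  "order_iso A leA B leB \<longleftrightarrow> (\<exists>f. bij_betw f A B \<and>
      (\<forall>x\<in>A. \<forall>y\<in>A. leA x y \<longleftrightarrow> leB (f x) (f y)))"

text \<open>The 6-crown on {0..5}: x_i = i, y_i = 3+i, with
  x0 < y0 > x1 < y1 > x2 < y2 > x0.\<close>
definition C6 :: "nat set" where
  "C6 = {0..5}"

definition C6_le :: "nat \<Rightarrow> nat \<Rightarrow> bool" where
  "C6_le a b \<longleftrightarrow> a = b \<or> (a, b) \<in> {(0,3),(1,3),(1,4),(2,4),(2,5),(0,5)}"

definition six_stack :: "'a set \<Rightarrow> ('a \<Rightarrow> 'a \<Rightarrow> bool) \<Rightarrow> nat \<Rightarrow> bool" where
  "six_stack P le n \<longleftrightarrow> poset_on P le \<and> n \<ge> 1 \<and> ranked P le n \<and>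
     (\<forall>i<n. order_iso (levels P le i (Suc i)) le C6 C6_le)"

definition retract :: "'a set \<Rightarrow> ('a \<Rightarrow> 'a \<Rightarrow> bool) \<Rightarrow> 'a set \<Rightarrow> bool" where
  "retract P le Q \<longleftrightarrow> Q \<subseteq> P \<and> (\<exists>f. f ` P \<subseteq> Q \<and>
     (\<forall>x\<in>P. \<forall>y\<in>P. le x y \<longrightarrow> le (f x) (f y)) \<and> (\<forall>q\<in>Q. f q = q))"

text \<open>Q (with induced order) is a 4-tower, i.e. (isomorphic to) an ordinal sum of
k \<ge> 1 two-element antichains: Q splits into k blocks g = 0..k-1 of exactly two
elements each, and x \<le> y iff x = y or x lies in an earlier block than y.\<close>
definition four_tower :: "'a set \<Rightarrow> ('a \<Rightarrow> 'a \<Rightarrow> bool) \<Rightarrow> bool" where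
  "four_tower Q le \<longleftrightarrow> (\<exists>k::nat. \<exists>g. k \<ge> 1 \<and> g ` Q \<subseteq> {0..<k} \<and>
     (\<forall>i<k. card {q\<in>Q. g q = i} = 2) \<and>
     (\<forall>x\<in>Q. \<forall>y\<in>Q. le x y \<longleftrightarrow> (x = y \<or> g x < g y)))"

end

theory Submission
  imports Defs
begin

(*
  Write P(0) = {a, b, c}, where {a, b} is the bottom block of the tower Q, and let ya, yb, yc be
  the elements of P(1) not above a, b, c respectively. Since consecutive levels form 6-crowns,
  every element of rank at least i + 2 lies above all of P(i), and yc is the only element of
  rank 1 above both a and b. So a block of Q other than the bottom one contains at most one
  element of rank 1, which forces the elements of Q of rank at most 2 into the two lowest blocks.

  Let f be the retraction. The images f ya and f yb are not both in the bottom block: otherwise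
  f ya = b and f yb = a, and f c would lie below both. The partner p of f yc in its block has
  rank 2 and is not above yc, hence lies above ya and yb; so f ya and f yb cannot both lie below
  f yc, for then they would lie below both elements of a block of index at most 1. Every x of
  rank at least 3 is above ya, yb, yc, so f x lies above f ya, f yb, f yc and therefore in block 2
  or higher. Consequently f maps P(3, n) into itself and Q meets P(3, n) in the blocks 2, 3, ...,
  which form a 4-tower. Finally n = 2 is impossible: f would send every element of P(2) above yc
  to f yc, and common upper covers of yc with ya and with yb would put f ya and f yb below f yc.
*)

section \<open>Ranks in finite posets\<close>

lemma poset_onD:
  assumes "poset_on S le"
  shows "finite S" and "x \<in> S \<Longrightarrow> le x x"
    and "x \<in> S \<Longrightarrow> y \<in> S \<Longrightarrow> le x y \<Longrightarrow> le y x \<Longrightarrow> x = y"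
    and "x \<in> S \<Longrightarrow> y \<in> S \<Longrightarrow> z \<in> S \<Longrightarrow> le x y \<Longrightarrow> le y z \<Longrightarrow> le x z"
  using assms unfolding poset_on_def by blast+

lemma sorted_wrt_strict_distinct: "sorted_wrt (strict le) xs \<Longrightarrow> distinct xs"
  by (induction xs) (auto simp: strict_def)

lemma sorted_wrt_last:
  "sorted_wrt R xs \<Longrightarrow> e \<in> set xs \<Longrightarrow> xs \<noteq> [] \<Longrightarrow> e = last xs \<or> R e (last xs)"
  by (induction xs) auto

lemma sorted_wrt_comparable:
  "sorted_wrt R xs \<Longrightarrow> x \<in> set xs \<Longrightarrow> y \<in> set xs \<Longrightarrow> x = y \<or> R x y \<or> R y x"
  by (induction xs) auto

lemma finite_chain_lengths:
  assumes "finite S"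
  shows "finite {m. \<exists>xs. length xs = Suc m \<and> set xs \<subseteq> S \<and> sorted_wrt (strict le) xs \<and> last xs = p}"
    (is "finite ?M")
proof (rule finite_subset)
  show "?M \<subseteq> {..<card S}"
  proof
    fix m assume "m \<in> ?M"
    then obtain xs where xs: "length xs = Suc m" "set xs \<subseteq> S" "sorted_wrt (strict le) xs"
      by blast
    have "length xs = card (set xs)"
      using sorted_wrt_strict_distinct[OF xs(3)] by (simp add: distinct_card)
    also have "\<dots> \<le> card S"
      using xs(2) assms by (rule card_mono[rotated])
    finally show "m \<in> {..<card S}" using xs(1) by simp
  qed
qed simp

lemma prank_geI:
  assumes "finite S" "length xs = Suc m" "set xs \<subseteq> S" "sorted_wrt (strict le) xs" "last xs = p"
  shows "m \<le> prank S le p"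
  unfolding prank_def using assms by (intro Max_ge[OF finite_chain_lengths]) blast+

lemma prank_chainE:
  assumes "finite S" "p \<in> S"
  obtains xs where "length xs = Suc (prank S le p)" "set xs \<subseteq> S" "sorted_wrt (strict le) xs"
    "last xs = p"
proof -
  have "0 \<in> {m. \<exists>xs. length xs = Suc m \<and> set xs \<subseteq> S \<and> sorted_wrt (strict le) xs \<and> last xs = p}"
    using assms(2) by (auto intro!: exI[of _ "[p]"])
  then show ?thesis
    using Max_in[OF finite_chain_lengths[OF assms(1)]] that unfolding prank_def by blast
qed

lemma prank_less:
  assumes "poset_on S le" "x \<in> S" "y \<in> S" "le x y" "x \<noteq> y"
  shows "prank S le x < prank S le y"
proof -
  note S = poset_onD[OF assms(1)]
  obtain xs where xs: "length xs = Suc (prank S le x)" "set xs \<subseteq> S" "sorted_wrt (strict le) xs"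
    "last xs = x"
    using prank_chainE[OF S(1) assms(2)] by blast
  have "strict le e y" if "e \<in> set xs" for e
  proof -
    have "xs \<noteq> []" using xs(1) by auto
    then have "e = x \<or> strict le e x"
      using sorted_wrt_last[OF xs(3) that] xs(4) by auto
    then have "le e x"
      using S(2)[OF assms(2)] by (auto simp: strict_def)
    moreover have "e \<in> S" using that xs(2) by blast
    ultimately show ?thesis
      using S(3,4) assms by (metis strict_def)
  qed
  then have "sorted_wrt (strict le) (xs @ [y])"
    using xs(3) by (simp add: sorted_wrt_append)
  then have "Suc (prank S le x) \<le> prank S le y"
    using xs assms(3) by (intro prank_geI[OF S(1)]) auto
  then show ?thesis by simp
qed

lemma prank_below_cover:
  assumes "poset_on S le" "p \<in> S" "prank S le p = Suc m"
  obtains w where "w \<in> S" "le w p" "w \<noteq> p" "prank S le w = m"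
proof -
  note S = poset_onD[OF assms(1)]
  obtain xs where xs: "length xs = Suc (Suc m)" "set xs \<subseteq> S" "sorted_wrt (strict le) xs"
    "last xs = p"
    using prank_chainE[OF S(1) assms(2), of le] assms(3) by auto
  obtain ys where ys: "xs = ys @ [p]"
    using xs(1,4) by (metis append_butlast_last_id list.size(3) nat.distinct(1))
  define w where "w = last ys"
  have "ys \<noteq> []" "length ys = Suc m" using xs(1) ys by auto
  then have w: "w \<in> set ys" "sorted_wrt (strict le) ys" "strict le w p"
    using xs(3) unfolding ys w_def by (auto simp: sorted_wrt_append)
  have "w \<in> S" using w(1) xs(2) ys by auto
  have "m \<le> prank S le w"
    using \<open>length ys = Suc m\<close> w(2) xs(2) ys by (intro prank_geI[OF S(1)]) (auto simp: w_def)
  moreover have "prank S le w < prank S le p"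
    using prank_less[OF assms(1) \<open>w \<in> S\<close> assms(2)] w(3) by (simp add: strict_def)
  ultimately show ?thesis
    using that \<open>w \<in> S\<close> w(3) assms(3) by (simp add: strict_def)
qed

lemma prank_below:
  assumes "poset_on S le" "p \<in> S" "j \<le> prank S le p"
  obtains w where "w \<in> S" "le w p" "prank S le w = j"
proof -
  have "\<exists>w\<in>S. le w p \<and> prank S le w = j"
    using assms(2,3)
  proof (induction "prank S le p - j" arbitrary: p)
    case 0
    then show ?case using poset_onD(2)[OF assms(1)] by force
  next
    case (Suc d)
    then obtain m where m: "prank S le p = Suc m" by (cases "prank S le p") auto
    obtain w where w: "w \<in> S" "le w p" "w \<noteq> p" "prank S le w = m"
      using prank_below_cover[OF assms(1) Suc.prems(1) m] .
    have "d = prank S le w - j" "j \<le> prank S le w"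
      using Suc.hyps(2) Suc.prems(2) m w(4) by auto
    then obtain v where "v \<in> S" "le v w" "prank S le v = j"
      using Suc.hyps(1) w(1) by blast
    then show ?case
      using poset_onD(4)[OF assms(1) _ w(1) Suc.prems(1)] w(2) by blast
  qed
  then show ?thesis using that by blast
qed

lemma maximal_chain_extends:
  assumes "finite S" "is_chain S le C"
  obtains D where "maximal_chain S le D" "C \<subseteq> D"
proof -
  let ?A = "{D. is_chain S le D \<and> C \<subseteq> D}"
  have "?A \<subseteq> Pow S" by (auto simp: is_chain_def)
  then have "finite ?A"
    using assms(1) by (simp add: finite_subset)
  moreover have "?A \<noteq> {}" using assms(2) by auto
  ultimately obtain D where D: "D \<in> ?A" and max: "\<And>D'. D' \<in> ?A \<Longrightarrow> D \<subseteq> D' \<Longrightarrow> D = D'"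
    using finite_has_maximal[of ?A] by metis
  have "maximal_chain S le D"
    unfolding maximal_chain_def using D max by auto
  then show ?thesis
    using that D by blast
qed

lemma prank_le_rank:
  assumes "poset_on S le" "ranked S le n" "p \<in> S"
  shows "prank S le p \<le> n"
proof -
  note S = poset_onD[OF assms(1)]
  obtain xs where xs: "length xs = Suc (prank S le p)" "set xs \<subseteq> S" "sorted_wrt (strict le) xs"
    using prank_chainE[OF S(1) assms(3)] by blast
  have "is_chain S le (set xs)"
    unfolding is_chain_def
    using xs(2) sorted_wrt_comparable[OF xs(3)] S(2) by (auto simp: strict_def)
  then obtain D where D: "maximal_chain S le D" "set xs \<subseteq> D"
    using maximal_chain_extends[OF S(1)] by blast
  have "D \<subseteq> S"
    using D(1) by (simp add: maximal_chain_def is_chain_def)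
  then have "finite D"
    using S(1) by (rule finite_subset)
  have "Suc (prank S le p) = card (set xs)"
    using sorted_wrt_strict_distinct[OF xs(3)] xs(1) by (simp add: distinct_card)
  also have "\<dots> \<le> card D" using D(2) \<open>finite D\<close> by (rule card_mono[rotated])
  also have "\<dots> = Suc n" using assms(2) D(1) by (simp add: ranked_def)
  finally show ?thesis by simp
qed

section \<open>The 6-crown\<close>

lemma C6_eq: "C6 = {0, 1, 2, 3, 4, 5}"
  by (auto simp: C6_def)

lemma C6_has_lower_iff: "k \<in> C6 \<Longrightarrow> (\<exists>j\<in>C6. j \<noteq> k \<and> C6_le j k) \<longleftrightarrow> 3 \<le> k"
  by (auto simp: C6_eq C6_le_def)

lemma C6_lower_part: "{j \<in> C6. j < 3} = {0, 1, 2}"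
  by (auto simp: C6_eq)

lemma C6_upper_part: "{j \<in> C6. 3 \<le> j} = {3, 4, 5}"
  by (auto simp: C6_eq)

lemma C6_unique_incomparable_below:
  assumes "k \<in> C6" "3 \<le> k"
  shows "\<exists>!j. j \<in> C6 \<and> j < 3 \<and> \<not> C6_le j k"
proof -
  have "k = 3 \<or> k = 4 \<or> k = 5" using assms by (auto simp: C6_eq)
  then show ?thesis
  proof (elim disjE)
    assume "k = 3" then show ?thesis by (intro ex1I[of _ 2]) (auto simp: C6_eq C6_le_def)
  next
    assume "k = 4" then show ?thesis by (intro ex1I[of _ 0]) (auto simp: C6_eq C6_le_def)
  next
    assume "k = 5" then show ?thesis by (intro ex1I[of _ 1]) (auto simp: C6_eq C6_le_def)
  qed
qed

lemma C6_unique_incomparable_above: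
  assumes "j \<in> C6" "j < 3"
  shows "\<exists>!k. k \<in> C6 \<and> 3 \<le> k \<and> \<not> C6_le j k"
proof -
  have "j = 0 \<or> j = 1 \<or> j = 2" using assms by auto
  then show ?thesis
  proof (elim disjE)
    assume "j = 0" then show ?thesis by (intro ex1I[of _ 4]) (auto simp: C6_eq C6_le_def)
  next
    assume "j = 1" then show ?thesis by (intro ex1I[of _ 5]) (auto simp: C6_eq C6_le_def)
  next
    assume "j = 2" then show ?thesis by (intro ex1I[of _ 3]) (auto simp: C6_eq C6_le_def)
  qed
qed

lemma order_iso_has_lower_iff:
  assumes h: "bij_betw h S T" and ord: "\<And>x y. x \<in> S \<Longrightarrow> y \<in> S \<Longrightarrow> le x y \<longleftrightarrow> le' (h x) (h y)"
    and "x \<in> S"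
  shows "(\<exists>y\<in>S. y \<noteq> x \<and> le y x) \<longleftrightarrow> (\<exists>j\<in>T. j \<noteq> h x \<and> le' j (h x))"
proof
  assume "\<exists>y\<in>S. y \<noteq> x \<and> le y x"
  then obtain y where "y \<in> S" "y \<noteq> x" "le y x" by blast
  then show "\<exists>j\<in>T. j \<noteq> h x \<and> le' j (h x)"
    using ord assms(3) bij_betw_imp_inj_on[OF h] bij_betwE[OF h]
    by (intro bexI[of _ "h y"]) (auto dest: inj_onD)
next
  assume "\<exists>j\<in>T. j \<noteq> h x \<and> le' j (h x)"
  then obtain y where "y \<in> S" "h y \<noteq> h x" "le' (h y) (h x)"
    using bij_betw_imp_surj_on[OF h] by (metis imageE)
  then show "\<exists>y\<in>S. y \<noteq> x \<and> le y x"
    using ord assms(3) by (intro bexI[of _ y]) auto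
qed

lemma bij_betw_Ex1_iff:
  assumes "bij_betw h A B"
  shows "(\<exists>!x. x \<in> A \<and> R (h x)) \<longleftrightarrow> (\<exists>!y. y \<in> B \<and> R y)"
proof -
  have "(\<exists>!x. x \<in> A \<and> R (h x)) \<longleftrightarrow> (\<exists>!y. y \<in> h ` A \<and> R y)"
    using bij_betw_imp_inj_on[OF assms] unfolding inj_on_def by blast
  then show ?thesis
    using bij_betw_imp_surj_on[OF assms] by simp
qed

section \<open>4-towers\<close>

locale tower_blocks =
  fixes Q :: "'a set" and le :: "'a \<Rightarrow> 'a \<Rightarrow> bool" and k :: nat and g :: "'a \<Rightarrow> nat"
  assumes block_less: "q \<in> Q \<Longrightarrow> g q < k"
    and card_block: "i < k \<Longrightarrow> card {q \<in> Q. g q = i} = 2"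
    and le_iff_block: "x \<in> Q \<Longrightarrow> y \<in> Q \<Longrightarrow> le x y \<longleftrightarrow> x = y \<or> g x < g y"

lemma four_tower_iff_tower_blocks: "four_tower Q le \<longleftrightarrow> (\<exists>k g. 1 \<le> k \<and> tower_blocks Q le k g)"
  unfolding four_tower_def tower_blocks_def by (simp add: image_subset_iff Ball_def)

context tower_blocks
begin

lemma block_pair:
  assumes "i < k"
  obtains x y where "x \<noteq> y" "{q \<in> Q. g q = i} = {x, y}"
  using card_block[OF assms] by (auto simp: card_2_iff)

lemma block_partner:
  assumes "q \<in> Q"
  obtains p where "p \<in> Q" "p \<noteq> q" "g p = g q"
proof -
  obtain x y where "x \<noteq> y" "{p \<in> Q. g p = g q} = {x, y}"
    using block_pair[OF block_less[OF assms]] .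
  then show ?thesis
    using that assms by (metis (mono_tags, lifting) insertCI mem_Collect_eq)
qed

lemma block_less_if_le_pair:
  assumes "w \<in> Q" "p \<in> Q" "q \<in> Q" "p \<noteq> q" "g p = g q" "le w p" "le w q"
  shows "g w < g p"
  using assms le_iff_block by metis

lemma finite_carrier: "finite Q"
proof (rule finite_subset)
  show "Q \<subseteq> (\<Union>i<k. {q \<in> Q. g q = i})"
    using block_less by blast
  have "finite {q \<in> Q. g q = i}" if "i < k" for i
    using card_block[OF that] by (intro card_ge_0_finite) simp
  then show "finite (\<Union>i<k. {q \<in> Q. g q = i})"
    by (intro finite_UN_I) auto
qed

lemma poset: "poset_on Q le"
  unfolding poset_on_def using finite_carrier le_iff_block by auto

lemma block_zero_if_minimal:
  assumes "x \<in> Q" "prank Q le x = 0"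
  shows "g x = 0"
proof (rule ccontr)
  assume "g x \<noteq> 0"
  obtain w v where "w \<noteq> v" "{q \<in> Q. g q = 0} = {w, v}"
    using block_pair[of 0] block_less[OF assms(1)] by auto
  then have "w \<in> Q" "g w = 0" by auto
  then have "le w x" "w \<noteq> x"
    using le_iff_block[OF _ assms(1)] \<open>g x \<noteq> 0\<close> by auto
  then have "prank Q le w < prank Q le x"
    using prank_less[OF poset \<open>w \<in> Q\<close> assms(1)] by blast
  then show False using assms(2) by simp
qed

lemma four_tower_upper_blocks:
  assumes "R \<subseteq> Q" "R \<noteq> {}" and up_closed: "\<And>x y. x \<in> R \<Longrightarrow> y \<in> Q \<Longrightarrow> g x \<le> g y \<Longrightarrow> y \<in> R"
  shows "four_tower R le"
proof -
  define j where "j = Min (g ` R)"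
  have "finite R" using assms(1) finite_carrier by (rule finite_subset)
  then have "j \<in> g ` R"
    using assms(2) unfolding j_def by (intro Min_in) auto
  then obtain r where r: "r \<in> R" "g r = j" by blast
  have j_le: "j \<le> g x" if "x \<in> R" for x
    using \<open>finite R\<close> that unfolding j_def by simp
  have R_eq: "R = {q \<in> Q. j \<le> g q}"
    using assms(1) j_le up_closed[OF r(1)] r(2) by blast
  have "tower_blocks R le (k - j) (\<lambda>q. g q - j)"
  proof
    show "g q - j < k - j" if "q \<in> R" for q
      using block_less[of q] j_le[OF that] that assms(1) by auto
    show "card {q \<in> R. g q - j = i} = 2" if "i < k - j" for i
    proof -
      have "{q \<in> R. g q - j = i} = {q \<in> Q. g q = i + j}"
        using R_eq by auto
      then show ?thesis using card_block that by simp
    qed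
    show "le x y \<longleftrightarrow> x = y \<or> g x - j < g y - j" if "x \<in> R" "y \<in> R" for x y
      using le_iff_block[OF subsetD[OF assms(1) that(1)] subsetD[OF assms(1) that(2)]]
        j_le[OF that(1)] j_le[OF that(2)] by auto
  qed
  moreover have "1 \<le> k - j"
    using block_less[of r] r assms(1) by auto
  ultimately show ?thesis
    unfolding four_tower_iff_tower_blocks by blast
qed

end

section \<open>6-stacks\<close>

lemma card_3_ex_other: "card A = 3 \<Longrightarrow> \<exists>z\<in>A. z \<noteq> x \<and> z \<noteq> y"
  by (auto simp: card_3_iff)

locale six_stack_poset =
  fixes P :: "'a set" and le :: "'a \<Rightarrow> 'a \<Rightarrow> bool" and n :: nat
  assumes six_stack: "six_stack P le n"
begin

abbreviation rank :: "'a \<Rightarrow> nat" where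
  "rank \<equiv> prank P le"

definition level :: "nat \<Rightarrow> 'a set" where
  "level i = {p \<in> P. rank p = i}"

lemma poset: "poset_on P le" and n_ge_1: "1 \<le> n"
  using six_stack by (auto simp: six_stack_def)

lemma le_refl: "x \<in> P \<Longrightarrow> le x x"
  using poset_onD(2)[OF poset] .

lemma le_trans: "x \<in> P \<Longrightarrow> y \<in> P \<Longrightarrow> z \<in> P \<Longrightarrow> le x y \<Longrightarrow> le y z \<Longrightarrow> le x z"
  using poset_onD(4)[OF poset] .

lemma level_subset: "level i \<subseteq> P"
  by (auto simp: level_def)

lemma rank_less: "x \<in> P \<Longrightarrow> y \<in> P \<Longrightarrow> le x y \<Longrightarrow> x \<noteq> y \<Longrightarrow> rank x < rank y"
  using prank_less[OF poset] .

lemma rank_le_n: "p \<in> P \<Longrightarrow> rank p \<le> n"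
  using prank_le_rank[OF poset] six_stack by (simp add: six_stack_def)

lemma rank_below:
  assumes "p \<in> P" "j \<le> rank p"
  obtains w where "w \<in> P" "le w p" "rank w = j"
  using prank_below[OF poset assms] .

lemma level_Suc_iff_has_lower:
  assumes "x \<in> level i \<union> level (Suc i)"
  shows "x \<in> level (Suc i) \<longleftrightarrow> (\<exists>y\<in>level i \<union> level (Suc i). y \<noteq> x \<and> le y x)"
proof
  assume x: "x \<in> level (Suc i)"
  then obtain y where "y \<in> P" "le y x" "rank y = i"
    using rank_below[of x i] by (auto simp: level_def)
  then show "\<exists>y\<in>level i \<union> level (Suc i). y \<noteq> x \<and> le y x"
    using x by (intro bexI[of _ y]) (auto simp: level_def)
next
  assume "\<exists>y\<in>level i \<union> level (Suc i). y \<noteq> x \<and> le y x"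
  then obtain y where "y \<in> level i \<union> level (Suc i)" "y \<noteq> x" "le y x" by blast
  then show "x \<in> level (Suc i)"
    using rank_less[of y x] assms by (auto simp: level_def)
qed

lemma slice_crown_iso:
  assumes "i < n"
  obtains h where "bij_betw h (level i \<union> level (Suc i)) C6"
    and "\<And>x y. x \<in> level i \<union> level (Suc i) \<Longrightarrow> y \<in> level i \<union> level (Suc i) \<Longrightarrow>
      le x y \<longleftrightarrow> C6_le (h x) (h y)"
    and "level i = {x \<in> level i \<union> level (Suc i). h x < 3}"
    and "level (Suc i) = {x \<in> level i \<union> level (Suc i). 3 \<le> h x}"
proof -
  let ?S = "level i \<union> level (Suc i)"
  have "levels P le i (Suc i) = ?S"
    by (auto simp: levels_def level_def)
  then obtain h where h: "bij_betw h ?S C6"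
    and ord: "\<And>x y. x \<in> ?S \<Longrightarrow> y \<in> ?S \<Longrightarrow> le x y \<longleftrightarrow> C6_le (h x) (h y)"
    using six_stack assms unfolding six_stack_def order_iso_def by auto
  show ?thesis
  proof (rule that[OF h ord])
    have upper: "x \<in> level (Suc i) \<longleftrightarrow> 3 \<le> h x" if "x \<in> ?S" for x
      using level_Suc_iff_has_lower[OF that] C6_has_lower_iff[OF bij_betw_apply[OF h that]]
        order_iso_has_lower_iff[where le = le and le' = C6_le, OF h ord that]
      by simp
    have lower: "x \<in> level i \<longleftrightarrow> h x < 3" if "x \<in> ?S" for x
    proof -
      have "x \<notin> level i \<or> x \<notin> level (Suc i)" by (auto simp: level_def)
      then show ?thesis using upper[OF that] that by auto
    qed
    show "level i = {x \<in> ?S. h x < 3}" "level (Suc i) = {x \<in> ?S. 3 \<le> h x}"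
      using lower upper by blast+
  qed
qed

lemma card_level_slice:
  assumes "i < n"
  shows "card (level i) = 3" "card (level (Suc i)) = 3"
proof -
  let ?S = "level i \<union> level (Suc i)"
  obtain h where h: "bij_betw h ?S C6"
    and "\<And>x y. x \<in> ?S \<Longrightarrow> y \<in> ?S \<Longrightarrow> le x y \<longleftrightarrow> C6_le (h x) (h y)"
    and lower: "level i = {x \<in> ?S. h x < 3}" and upper: "level (Suc i) = {x \<in> ?S. 3 \<le> h x}"
    using slice_crown_iso[OF assms] by blast
  have card_part: "card {x \<in> ?S. Q (h x)} = card {j \<in> C6. Q j}" for Q
  proof -
    have "bij_betw h {x \<in> ?S. Q (h x)} {j \<in> C6. Q j}"
      using h unfolding bij_betw_def inj_on_def by auto
    then show ?thesis by (rule bij_betw_same_card)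
  qed
  have "card (level i) = card {j \<in> C6. j < 3}"
    by (subst lower) (rule card_part)
  then show "card (level i) = 3"
    by (simp add: C6_lower_part)
  have "card (level (Suc i)) = card {j \<in> C6. 3 \<le> j}"
    by (subst upper) (rule card_part)
  then show "card (level (Suc i)) = 3"
    by (simp add: C6_upper_part)
qed

lemma card_level: "i \<le> n \<Longrightarrow> card (level i) = 3"
  using card_level_slice[of i] card_level_slice(2)[of "n - 1"] n_ge_1
  by (cases "i < n") (auto simp: le_less)

lemma unique_incomparable_below:
  assumes "i < n" "y \<in> level (Suc i)"
  shows "\<exists>!x. x \<in> level i \<and> \<not> le x y"
proof -
  let ?S = "level i \<union> level (Suc i)"
  obtain h where h: "bij_betw h ?S C6" and ord: "\<And>x y. x \<in> ?S \<Longrightarrow> y \<in> ?S \<Longrightarrow> le x y \<longleftrightarrow> C6_le (h x) (h y)"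
    and lower: "level i = {x \<in> ?S. h x < 3}" and upper: "level (Suc i) = {x \<in> ?S. 3 \<le> h x}"
    using slice_crown_iso[OF assms(1)] by blast
  have y: "y \<in> ?S" "3 \<le> h y" using assms(2) upper by auto
  have "(\<lambda>x. x \<in> level i \<and> \<not> le x y) = (\<lambda>x. x \<in> ?S \<and> (h x < 3 \<and> \<not> C6_le (h x) (h y)))"
    using ord y(1) by (subst lower) blast
  then have "(\<exists>!x. x \<in> level i \<and> \<not> le x y) \<longleftrightarrow> (\<exists>!j. j \<in> C6 \<and> j < 3 \<and> \<not> C6_le j (h y))"
    using bij_betw_Ex1_iff[OF h, of "\<lambda>j. j < 3 \<and> \<not> C6_le j (h y)"] by simp
  then show ?thesis
    using C6_unique_incomparable_below[OF bij_betw_apply[OF h y(1)] y(2)] by blast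
qed

lemma unique_incomparable_above:
  assumes "i < n" "x \<in> level i"
  shows "\<exists>!y. y \<in> level (Suc i) \<and> \<not> le x y"
proof -
  let ?S = "level i \<union> level (Suc i)"
  obtain h where h: "bij_betw h ?S C6" and ord: "\<And>x y. x \<in> ?S \<Longrightarrow> y \<in> ?S \<Longrightarrow> le x y \<longleftrightarrow> C6_le (h x) (h y)"
    and lower: "level i = {x \<in> ?S. h x < 3}" and upper: "level (Suc i) = {x \<in> ?S. 3 \<le> h x}"
    using slice_crown_iso[OF assms(1)] by blast
  have x: "x \<in> ?S" "h x < 3" using assms(2) lower by auto
  have "(\<lambda>y. y \<in> level (Suc i) \<and> \<not> le x y) = (\<lambda>y. y \<in> ?S \<and> (3 \<le> h y \<and> \<not> C6_le (h x) (h y)))"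
    using ord x(1) by (subst upper) blast
  then have "(\<exists>!y. y \<in> level (Suc i) \<and> \<not> le x y) \<longleftrightarrow> (\<exists>!k. k \<in> C6 \<and> 3 \<le> k \<and> \<not> C6_le (h x) k)"
    using bij_betw_Ex1_iff[OF h, of "\<lambda>k. 3 \<le> k \<and> \<not> C6_le (h x) k"] by simp
  then show ?thesis
    using C6_unique_incomparable_above[OF bij_betw_apply[OF h x(1)] x(2)] by blast
qed

definition opposite :: "nat \<Rightarrow> 'a \<Rightarrow> 'a" where
  "opposite i x = (THE y. y \<in> level (Suc i) \<and> \<not> le x y)"

lemma opposite_level: "i < n \<Longrightarrow> x \<in> level i \<Longrightarrow> opposite i x \<in> level (Suc i)"
  and not_le_opposite: "i < n \<Longrightarrow> x \<in> level i \<Longrightarrow> \<not> le x (opposite i x)"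
  using theI'[OF unique_incomparable_above] unfolding opposite_def by blast+

lemma eq_opposite: "i < n \<Longrightarrow> x \<in> level i \<Longrightarrow> y \<in> level (Suc i) \<Longrightarrow> \<not> le x y \<Longrightarrow> y = opposite i x"
  unfolding opposite_def
  by (rule the1_equality[symmetric]) (use unique_incomparable_above in blast)+

lemma le_if_other_not_le:
  "i < n \<Longrightarrow> y \<in> level (Suc i) \<Longrightarrow> x \<in> level i \<Longrightarrow> x' \<in> level i \<Longrightarrow> x' \<noteq> x \<Longrightarrow> \<not> le x y
    \<Longrightarrow> le x' y"
  using unique_incomparable_below by blast

lemma le_opposite: "i < n \<Longrightarrow> x \<in> level i \<Longrightarrow> x' \<in> level i \<Longrightarrow> x' \<noteq> x \<Longrightarrow> le x' (opposite i x)"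
  using le_if_other_not_le opposite_level not_le_opposite by blast

lemma le_if_rank_ge:
  assumes "x \<in> P" "w \<in> level i" "i + 2 \<le> rank x"
  shows "le w x"
proof -
  obtain v where v: "v \<in> P" "le v x" "rank v = i + 2"
    using rank_below assms(1,3) by blast
  have i: "Suc i < n" using rank_le_n[OF v(1)] v(3) by simp
  have v_level: "v \<in> level (Suc (Suc i))" using v by (simp add: level_def)
  obtain y0 where y0: "y0 \<in> level (Suc i)" "\<not> le y0 v"
    using unique_incomparable_below[OF i v_level] by blast
  obtain y where y: "y \<in> level (Suc i)" "y \<noteq> y0" "y \<noteq> opposite i w"
    using card_3_ex_other[OF card_level[of "Suc i"]] i by auto
  have "le w y" using eq_opposite[OF _ assms(2) y(1)] y(3) i by auto
  moreover have "le y v" using le_if_other_not_le[OF i v_level y0(1) y(1) y(2) y0(2)] .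
  moreover have "w \<in> P" "y \<in> P" using assms(2) y(1) by (auto simp: level_def)
  ultimately show ?thesis using le_trans v(1,2) assms(1) by blast
qed

lemma common_upper_cover:
  assumes "i < n" "x \<in> level i" "x' \<in> level i" "x \<noteq> x'"
  obtains z where "z \<in> level (Suc i)" "le x z" "le x' z"
proof -
  obtain w where "w \<in> level i" "w \<noteq> x" "w \<noteq> x'"
    using card_3_ex_other[OF card_level[of i]] assms(1) by auto
  then show ?thesis
    using that opposite_level le_opposite assms by metis
qed

end

section \<open>Retracting a 6-stack onto a 4-tower\<close>

lemma retract_restrict:
  assumes "Q \<subseteq> P" "\<And>x. x \<in> P \<Longrightarrow> f x \<in> Q" "\<And>x y. x \<in> P \<Longrightarrow> y \<in> P \<Longrightarrow> le x y \<Longrightarrow> le (f x) (f y)"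
    "\<And>q. q \<in> Q \<Longrightarrow> f q = q" "S \<subseteq> P" "\<And>x. x \<in> S \<Longrightarrow> f x \<in> S"
  shows "retract S le (Q \<inter> S)"
  unfolding retract_def using assms by (intro conjI exI[of _ f]) (auto simp: subset_iff)

locale tower_retract = six_stack_poset P le n + tower_blocks Q le k g
  for P :: "'a set" and le n Q k g +
  fixes f :: "'a \<Rightarrow> 'a" and a b :: 'a
  assumes Q_subset: "Q \<subseteq> P"
    and f_into: "x \<in> P \<Longrightarrow> f x \<in> Q"
    and f_mono: "x \<in> P \<Longrightarrow> y \<in> P \<Longrightarrow> le x y \<Longrightarrow> le (f x) (f y)"
    and f_fix: "q \<in> Q \<Longrightarrow> f q = q"
    and a_b: "a \<in> Q" "b \<in> Q" "a \<noteq> b" "g a = 0" "g b = 0" "rank a = 0" "rank b = 0"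
begin

lemma f_in_P: "x \<in> P \<Longrightarrow> f x \<in> P"
  using f_into Q_subset by blast

lemma block_zero:
  assumes "q \<in> Q" "g q = 0"
  shows "q = a \<or> q = b"
proof -
  have "0 < k" using block_less[OF a_b(1)] by simp
  then obtain x y where xy: "{q \<in> Q. g q = 0} = {x, y}"
    using block_pair by blast
  have "a \<in> {x, y}" "b \<in> {x, y}" "q \<in> {x, y}"
    unfolding xy[symmetric] using a_b assms by auto
  then show ?thesis using a_b(3) by auto
qed

lemma above_bottom_if_positive:
  assumes "q \<in> Q" "0 < g q"
  shows "le a q" "le b q" "1 \<le> rank q"
proof -
  show "le a q" "le b q"
    using le_iff_block[OF a_b(1) assms(1)] le_iff_block[OF a_b(2) assms(1)] assms(2) a_b by auto
  moreover have "a \<noteq> q" using assms(2) a_b(4) by auto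
  ultimately have "rank a < rank q"
    using rank_less[of a q] Q_subset assms(1) a_b(1) by auto
  then show "1 \<le> rank q" by simp
qed

lemma positive_if_above_bottom: "q \<in> Q \<Longrightarrow> le a q \<Longrightarrow> le b q \<Longrightarrow> 0 < g q"
  using block_zero le_iff_block a_b by (metis gr0I less_nat_zero_code)

definition c :: 'a where
  "c = (SOME c. c \<in> level 0 \<and> c \<noteq> a \<and> c \<noteq> b)"

lemma level_zero: "level 0 = {a, b, c}" and c_ne: "c \<noteq> a" "c \<noteq> b"
proof -
  have a_b_level: "a \<in> level 0" "b \<in> level 0"
    using a_b Q_subset by (auto simp: level_def)
  have "\<exists>c. c \<in> level 0 \<and> c \<noteq> a \<and> c \<noteq> b"
    using card_3_ex_other[OF card_level] by blast
  then have c: "c \<in> level 0 \<and> c \<noteq> a \<and> c \<noteq> b"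
    unfolding c_def by (rule someI_ex)
  then show "c \<noteq> a" "c \<noteq> b" by simp_all
  have sub: "{a, b, c} \<subseteq> level 0" and card: "card {a, b, c} = 3"
    using a_b_level c a_b(3) by auto
  have "finite (level 0)"
    using card_level[OF le0] by (intro card_ge_0_finite) simp
  then show "level 0 = {a, b, c}"
    using card_subset_eq[OF _ sub] card card_level[OF le0] by simp
qed

definition ya :: 'a where
  "ya = opposite 0 a"

definition yb :: 'a where
  "yb = opposite 0 b"

definition yc :: 'a where
  "yc = opposite 0 c"

lemma level_zero_elems: "a \<in> level 0" "b \<in> level 0" "c \<in> level 0"
  using level_zero by auto

lemma level_one: "ya \<in> level 1" "yb \<in> level 1" "yc \<in> level 1"
  using opposite_level[OF _ level_zero_elems(1)] opposite_level[OF _ level_zero_elems(2)]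
    opposite_level[OF _ level_zero_elems(3)] n_ge_1
  by (auto simp: ya_def yb_def yc_def)

lemma not_le_level_one: "\<not> le a ya" "\<not> le b yb" "\<not> le c yc"
  using not_le_opposite[OF _ level_zero_elems(1)] not_le_opposite[OF _ level_zero_elems(2)]
    not_le_opposite[OF _ level_zero_elems(3)] n_ge_1
  by (auto simp: ya_def yb_def yc_def)

lemma le_level_one: "le b ya" "le c ya" "le a yb" "le c yb" "le a yc" "le b yc"
  using le_opposite[OF _ level_zero_elems(1)] le_opposite[OF _ level_zero_elems(2)]
    le_opposite[OF _ level_zero_elems(3)] level_zero_elems n_ge_1 a_b(3) c_ne
  by (auto simp: ya_def yb_def yc_def)

lemma level_one_distinct: "ya \<noteq> yb" "ya \<noteq> yc" "yb \<noteq> yc"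
  using le_level_one not_le_level_one by metis+

lemma eq_yc_if_above_bottom:
  assumes "w \<in> level 1" "le a w" "le b w"
  shows "w = yc"
proof -
  have n: "0 < n" using n_ge_1 by simp
  have "\<exists>!x. x \<in> level 0 \<and> \<not> le x w"
    using unique_incomparable_below[OF n, of w] assms(1) by simp
  then obtain x where x: "x \<in> level 0" "\<not> le x w" by blast
  then have "x = c" using level_zero assms(2,3) by auto
  then show ?thesis
    using eq_opposite[OF n x(1)] x(2) assms(1) by (simp add: yc_def)
qed

lemma le_ya_yb_if_not_le_yc:
  assumes "p \<in> level 2" "\<not> le yc p"
  shows "le ya p" "le yb p"
proof -
  have "1 < n" using rank_le_n[of p] assms(1) by (auto simp: level_def)
  then show "le ya p" "le yb p"
    using le_if_other_not_le[of 1 p yc] assms level_one level_one_distinct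
    by (auto simp: numeral_2_eq_2)
qed

lemma level_one_le_if_rank_ge_3: "y \<in> level 1 \<Longrightarrow> x \<in> P \<Longrightarrow> 3 \<le> rank x \<Longrightarrow> le y x"
  using le_if_rank_ge[of x y 1] by simp

lemma level_one_in_P: "ya \<in> P" "yb \<in> P" "yc \<in> P"
  using level_one level_subset by blast+

lemma level_zero_in_P: "a \<in> P" "b \<in> P" "c \<in> P"
  using level_zero_elems level_subset by blast+

lemma f_ya_f_yb_not_bottom: "\<not> (g (f ya) = 0 \<and> g (f yb) = 0)"
proof
  assume bottom: "g (f ya) = 0 \<and> g (f yb) = 0"
  have f_y: "f ya \<in> Q" "f yb \<in> Q" using f_into level_one_in_P by auto
  have "le b (f ya)" "le a (f yb)"
    using f_mono[OF level_zero_in_P(2) level_one_in_P(1)]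
      f_mono[OF level_zero_in_P(1) level_one_in_P(2)] le_level_one f_fix a_b(1,2) by auto
  then have "f ya = b" "f yb = a"
    using block_zero[OF f_y(1)] block_zero[OF f_y(2)] bottom le_iff_block[OF a_b(1,2)]
      le_iff_block[OF a_b(2,1)] a_b(3-5) by auto
  moreover have "le (f c) (f ya)" "le (f c) (f yb)"
    using f_mono[OF level_zero_in_P(3) level_one_in_P(1)]
      f_mono[OF level_zero_in_P(3) level_one_in_P(2)] le_level_one by auto
  moreover have "f c \<in> Q" using f_into level_zero_in_P(3) by blast
  ultimately have "f c = b" "f c = a"
    using le_iff_block[of "f c"] a_b by auto
  then show False using a_b(3) by simp
qed

lemma block_le_1_if_rank_le_2:
  assumes "q \<in> Q" "rank q \<le> 2"
  shows "g q \<le> 1"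
proof (rule ccontr)
  assume "\<not> g q \<le> 1"
  then have "1 < k" using block_less[OF assms(1)] by simp
  then obtain w w' where "w \<noteq> w'" and block_one: "{p \<in> Q. g p = 1} = {w, w'}"
    using block_pair by blast
  have "v = yc" if "v \<in> Q" "g v = 1" for v
  proof -
    have "le v q" "v \<noteq> q"
      using le_iff_block[OF that(1) assms(1)] that(2) \<open>\<not> g q \<le> 1\<close> by auto
    then have "rank v < rank q"
      using rank_less Q_subset that(1) assms(1) by blast
    moreover have "1 \<le> rank v" "le a v" "le b v"
      using above_bottom_if_positive[OF that(1)] that(2) by auto
    ultimately show "v = yc"
      using eq_yc_if_above_bottom[of v] assms(2) that(1) Q_subset by (auto simp: level_def)
  qed
  then show False
    using \<open>w \<noteq> w'\<close> block_one by blast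
qed

lemma f_yc_positive: "0 < g (f yc)"
proof -
  have "le a (f yc)" "le b (f yc)"
    using f_mono[OF level_zero_in_P(1) level_one_in_P(3)]
      f_mono[OF level_zero_in_P(2) level_one_in_P(3)] le_level_one f_fix a_b(1,2) by auto
  then show ?thesis
    using positive_if_above_bottom f_into level_one_in_P(3) by blast
qed

lemma eq_f_yc_if_above:
  assumes "q \<in> Q" "le (f yc) q" "g q \<le> 1"
  shows "q = f yc"
  using le_iff_block[OF f_into[OF level_one_in_P(3)] assms(1)] assms(2,3) f_yc_positive by auto

lemma f_yc_partner:
  obtains p where "p \<in> Q" "p \<noteq> f yc" "g p = g (f yc)" "rank p = 2" "\<not> le yc p"
proof -
  have f_yc: "f yc \<in> Q" using f_into level_one_in_P(3) by blast
  obtain p where p: "p \<in> Q" "p \<noteq> f yc" "g p = g (f yc)"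
    using block_partner[OF f_yc] by blast
  have p_P: "p \<in> P" using p(1) Q_subset by blast
  have not_le: "\<not> le yc p"
  proof
    assume "le yc p"
    then have "le (f yc) p"
      using f_mono[OF level_one_in_P(3) p_P] f_fix[OF p(1)] by simp
    then show False
      using le_iff_block[OF f_yc p(1)] p(2,3) by auto
  qed
  have "p \<noteq> yc" using not_le le_refl level_one_in_P(3) by blast
  then have "rank p \<noteq> 1"
    using eq_yc_if_above_bottom above_bottom_if_positive[OF p(1)] p(3) f_yc_positive p_P
    by (auto simp: level_def)
  moreover have "\<not> 3 \<le> rank p"
    using level_one_le_if_rank_ge_3[OF level_one(3) p_P] not_le by blast
  moreover have "1 \<le> rank p"
    using above_bottom_if_positive[OF p(1)] p(3) f_yc_positive by simp
  ultimately have "rank p = 2" by simp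
  then show ?thesis using that p not_le by blast
qed

lemma not_f_ya_f_yb_le_f_yc: "\<not> (le (f ya) (f yc) \<and> le (f yb) (f yc))"
proof
  assume le_f_yc: "le (f ya) (f yc) \<and> le (f yb) (f yc)"
  obtain p where p: "p \<in> Q" "p \<noteq> f yc" "g p = g (f yc)" "rank p = 2" "\<not> le yc p"
    using f_yc_partner .
  have p_P: "p \<in> P" using p(1) Q_subset by blast
  have "le ya p" "le yb p"
    using le_ya_yb_if_not_le_yc[OF _ p(5)] p_P p(4) by (auto simp: level_def)
  then have "le (f ya) p" "le (f yb) p"
    using f_mono[OF level_one_in_P(1) p_P] f_mono[OF level_one_in_P(2) p_P] f_fix[OF p(1)] by auto
  moreover have "f ya \<in> Q" "f yb \<in> Q" "f yc \<in> Q"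
    using f_into level_one_in_P by auto
  ultimately have "g (f ya) < g p" "g (f yb) < g p"
    using block_less_if_le_pair[OF _ p(1) _ p(2,3)] le_f_yc by auto
  moreover have "g p \<le> 1"
    using block_le_1_if_rank_le_2[OF p(1)] p(4) by simp
  ultimately show False
    using f_ya_f_yb_not_bottom by simp
qed

lemma two_le_block_f_if_rank_ge_3:
  assumes "x \<in> P" "3 \<le> rank x"
  shows "2 \<le> g (f x)"
proof (rule ccontr)
  assume "\<not> 2 \<le> g (f x)"
  have "le (f y) (f x)" if "y \<in> level 1" for y
    using f_mono[OF _ assms(1) level_one_le_if_rank_ge_3[OF that assms]] that level_subset by blast
  then have "le (f ya) (f x)" "le (f yb) (f x)" "f x = f yc"
    using level_one eq_f_yc_if_above[OF f_into[OF assms(1)]] \<open>\<not> 2 \<le> g (f x)\<close> by auto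
  then show False
    using not_f_ya_f_yb_le_f_yc by simp
qed

lemma rank_f_ge_3: "x \<in> P \<Longrightarrow> 3 \<le> rank x \<Longrightarrow> 3 \<le> rank (f x)"
  using two_le_block_f_if_rank_ge_3 block_le_1_if_rank_le_2 f_into by fastforce

lemma rank_ge_3_iff_block_ge_2: "q \<in> Q \<Longrightarrow> 3 \<le> rank q \<longleftrightarrow> 2 \<le> g q"
  using two_le_block_f_if_rank_ge_3 block_le_1_if_rank_le_2 f_fix Q_subset by fastforce

lemma n_ge_3: "3 \<le> n"
proof (rule ccontr)
  assume "\<not> 3 \<le> n"
  obtain p where "p \<in> Q" "rank p = 2"
    using f_yc_partner by metis
  then have n: "n = 2"
    using rank_le_n Q_subset \<open>\<not> 3 \<le> n\<close> by fastforce
  have f_eq: "f z = f yc" if "z \<in> level 2" "le yc z" for z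
  proof -
    have "z \<in> P" using that(1) level_subset by blast
    then have "le (f yc) (f z)" "g (f z) \<le> 1"
      using f_mono[OF level_one_in_P(3) _ that(2)] block_le_1_if_rank_le_2[OF f_into]
        rank_le_n[OF f_in_P] n by auto
    then show ?thesis
      using eq_f_yc_if_above f_into \<open>z \<in> P\<close> by metis
  qed
  have "le (f y) (f yc)" if y: "y \<in> level 1" "y \<noteq> yc" for y
  proof -
    have "1 < n" using n by simp
    obtain z where z: "z \<in> level (Suc 1)" "le y z" "le yc z"
      using common_upper_cover[OF \<open>1 < n\<close> y(1) level_one(3) y(2)] .
    then have "le (f y) (f z)"
      using f_mono y(1) level_subset by blast
    then show ?thesis using f_eq[of z] z by (simp add: numeral_2_eq_2)
  qed
  then show False
    using not_f_ya_f_yb_le_f_yc level_one level_one_distinct by simp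
qed

lemma retract_four_tower_upper_levels:
  "retract (levels P le 3 n) le (Q \<inter> levels P le 3 n) \<and> four_tower (Q \<inter> levels P le 3 n) le"
proof
  show "retract (levels P le 3 n) le (Q \<inter> levels P le 3 n)"
  proof (rule retract_restrict[where f = f])
    show "levels P le 3 n \<subseteq> P" by (auto simp: levels_def)
    show "f x \<in> levels P le 3 n" if "x \<in> levels P le 3 n" for x
      using that f_in_P rank_f_ge_3 rank_le_n by (auto simp: levels_def)
  qed (fact Q_subset f_into f_mono f_fix)+
  have R: "Q \<inter> levels P le 3 n = {q \<in> Q. 2 \<le> g q}"
    using rank_ge_3_iff_block_ge_2 rank_le_n Q_subset by (auto simp: levels_def)
  obtain x where "x \<in> level 3"
    using card_level[OF n_ge_3] by fastforce
  then have "f x \<in> {q \<in> Q. 2 \<le> g q}"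
    using two_le_block_f_if_rank_ge_3 f_into level_subset by (auto simp: level_def)
  then show "four_tower (Q \<inter> levels P le 3 n) le"
    unfolding R by (intro four_tower_upper_blocks) auto
qed

end

theorem lemma5p8:
  fixes P Q :: "'a set" and le :: "'a \<Rightarrow> 'a \<Rightarrow> bool" and n :: nat
  assumes "six_stack P le n"
    and "retract P le Q"
    and "four_tower Q le"
    and "card (levels P le 0 0 \<inter> levels Q le 0 0) = 2"
  shows "n \<ge> 3 \<and> (\<exists>R. retract (levels P le 3 n) le R \<and> four_tower R le)"
proof -
  interpret six_stack_poset P le n
    using assms(1) by unfold_locales
  obtain f where f: "Q \<subseteq> P" "f ` P \<subseteq> Q" "\<forall>x\<in>P. \<forall>y\<in>P. le x y \<longrightarrow> le (f x) (f y)" "\<forall>q\<in>Q. f q = q"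
    using assms(2) unfolding retract_def by blast
  obtain k g where "tower_blocks Q le k g"
    using assms(3) unfolding four_tower_iff_tower_blocks by blast
  then interpret tower_blocks Q le k g .
  obtain a b where "a \<noteq> b" and ab: "levels P le 0 0 \<inter> levels Q le 0 0 = {a, b}"
    using assms(4) by (auto simp: card_2_iff)
  have "a \<in> Q" "b \<in> Q" "prank P le a = 0" "prank P le b = 0" "prank Q le a = 0" "prank Q le b = 0"
    using ab unfolding levels_def by blast+
  then interpret tower_retract P le n Q k g f a b
    using f \<open>a \<noteq> b\<close> block_zero_if_minimal by unfold_locales auto
  show ?thesis
    using n_ge_3 retract_four_tower_upper_levels by blast
qed

end
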